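(* Let $\mathcal{R}=(\mathcal{W},\mathcal{R}_1,\mathcal{R}_2)$ with $\mathcal{W}=\{1,\dots,m\}$, let $\mathcal{S}$, $L$, $K_1,\dots,K_4$ be constructed from $\mathcal{R}$ as below, and let $\mathcal{T}$ be a solution to the $\mathcal{S}$-cyclic triomino problem. Fix $s\in\mathbb{Z}^2$. If $p(s,i)$ holds for some $1\le i\le 4$, then $p(s,i)$ holds for every $1\le i\le 4$.
   Context: A domino set is $\mathcal{R}=(\mathcal{W},\mathcal{R}_1,\mathcal{R}_2)$ with $\mathcal{W}$ non-empty finite and $\mathcal{R}_1,\mathcal{R}_2\subset\mathcal{W}^2$; here $\mathcal{W}=\{1,\dots,m\}$. Let $u_1=(1,0),u_2=(0,1),u_3=(-1,0),u_4=(0,-1)$, indices mod 4. Fix $n\ge 2m+1$ and regard integers as elements of $\mathbb{Z}_n$. Let $L=\{(w,0,0): w\in\mathcal{W}\}$, $K_1=L\cup\{(0,b,a):(a,b)\in\mathcal{R}_1\}$, $K_2=L\cup\{(0,a,b):(a,b)\in\mathcal{R}_2\}$, $K_3=L\cup\{(0,a,b):(a,b)\in\mathcal{R}_1\}$, $K_4=L\cup\{(0,b,a):(a,b)\in\mathcal{R}_2\}$, with $K_{i+4}=K_i$. Let $\mathcal{V}=\mathbb{Z}_n$, $\mathcal{S}_i=\{(a+k,b+k,c+k):(a,b,c)\in K_i, k\in\mathcal{V}\}$, $\mathcal{S}_{i+4}=\mathcal{S}_i$, and $\mathcal{S}=(\mathcal{V},\mathcal{S}_1,\dots,\mathcal{S}_4)$.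 A solution to the $\mathcal{S}$-cyclic triomino problem is a function $\mathcal{T}:\mathbb{Z}^2\to\mathcal{V}$ with $(\mathcal{T}(s),\mathcal{T}(s+u_i),\mathcal{T}(s+u_{i+1}))\in\mathcal{S}_i$ for all $s$ and $1\le i\le 4$. For $s\in\mathbb{Z}^2$, $i\in\mathbb{Z}$, $p(s,i)$ is the statement $(\mathcal{T}(s),\mathcal{T}(s+u_i),\mathcal{T}(s+u_{i+1}))\in L$ and $q(s,i)$ is the statement $(\mathcal{T}(s),\mathcal{T}(s+u_i),\mathcal{T}(s+u_{i+1}))\in K_i\setminus L$. *)

theory Defs
  imports Main
begin

text \<open>Domino set with tile set W = {1..m} (m \<ge> 1), R1, R2 \<subseteq> W^2.
  Elements of Z_n are represented by integers in {0..<n}; an integer is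
  regarded as an element of Z_n via reduction mod n.\<close>

definition dir :: "int \<Rightarrow> int \<times> int" where
  "dir i = (if i mod 4 = 1 then (1, 0)
            else if i mod 4 = 2 then (0, 1)
            else if i mod 4 = 3 then (-1, 0)
            else (0, -1))"

definition vadd :: "int \<times> int \<Rightarrow> int \<times> int \<Rightarrow> int \<times> int" where
  "vadd s t = (fst s + fst t, snd s + snd t)"

definition Lset :: "int \<Rightarrow> (int \<times> int \<times> int) set" where
  "Lset m = {(w, 0, 0) | w. w \<in> {1..m}}"

definition Kset :: "int \<Rightarrow> (int \<times> int) set \<Rightarrow> (int \<times> int) set \<Rightarrow> int
                    \<Rightarrow> (int \<times> int \<times> int) set" where
  "Kset m R1 R2 i = Lset m \<union>
     (if i mod 4 = 1 then {(0, b, a) | a b. (a, b) \<in> R1}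
      else if i mod 4 = 2 then {(0, a, b) | a b. (a, b) \<in> R2}
      else if i mod 4 = 3 then {(0, a, b) | a b. (a, b) \<in> R1}
      else {(0, b, a) | a b. (a, b) \<in> R2})"

definition red3 :: "int \<Rightarrow> int \<times> int \<times> int \<Rightarrow> int \<times> int \<times> int" where
  "red3 n t = (case t of (a, b, c) \<Rightarrow> (a mod n, b mod n, c mod n))"

definition Sset :: "int \<Rightarrow> int \<Rightarrow> (int \<times> int) set \<Rightarrow> (int \<times> int) set \<Rightarrow> int
                    \<Rightarrow> (int \<times> int \<times> int) set" where
  "Sset n m R1 R2 i = {red3 n (a + k, b + k, c + k) | a b c k.
                         (a, b, c) \<in> Kset m R1 R2 i \<and> k \<in> {0..<n}}"

definition triple_at :: "(int \<times> int \<Rightarrow> int) \<Rightarrow> int \<times> int \<Rightarrow> int \<Rightarrow> int \<times> int \<times> int" where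
  "triple_at T s i = (T s, T (vadd s (dir i)), T (vadd s (dir (i + 1))))"

definition cyclic_triomino_solution ::
  "int \<Rightarrow> int \<Rightarrow> (int \<times> int) set \<Rightarrow> (int \<times> int) set \<Rightarrow> (int \<times> int \<Rightarrow> int) \<Rightarrow> bool" where
  "cyclic_triomino_solution n m R1 R2 T \<longleftrightarrow>
     (\<forall>s. T s \<in> {0..<n}) \<and>
     (\<forall>s. \<forall>i\<in>{1..4}. triple_at T s i \<in> Sset n m R1 R2 i)"

definition p_prop :: "int \<Rightarrow> int \<Rightarrow> (int \<times> int \<Rightarrow> int) \<Rightarrow> int \<times> int \<Rightarrow> int \<Rightarrow> bool" where
  "p_prop n m T s i \<longleftrightarrow> triple_at T s i \<in> red3 n ` Lset m"

end

theory Submission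
  imports Defs
begin

text \<open>If p(s,i) holds, the centre T(s) is a tile w in W. A triple of S_j with centre w and
  second entry 0 must come from L: a shift of (0, b, a) with centre w has second entry
  w + b in [2, 2m], which is nonzero in Z_n because n > 2m. Hence a zero at the neighbour
  s + u_j forces a zero at s + u_(j+1), and going once around the four neighbours makes all
  of them zero.\<close>

lemma periodic_step_propagation:
  fixes P :: "int \<Rightarrow> bool" and p :: int
  assumes "p > 0"
    and periodic: "\<And>j j'. j mod p = j' mod p \<Longrightarrow> P j = P j'"
    and step: "\<And>j. P j \<Longrightarrow> P (j + 1)"
    and "P i"
  shows "P j"
proof -
  have "P (i + int k)" for k :: nat
  proof (induction k)
    case (Suc k)
    then show ?case
      using step[of "i + int k"] by (simp add: ac_simps)
  qed (use \<open>P i\<close> in simp)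
  then have "P (i + (j - i) mod p)"
    using \<open>p > 0\<close> by (metis pos_mod_sign zero_le_imp_eq_int)
  moreover have "(i + (j - i) mod p) mod p = j mod p"
    by (simp add: mod_add_right_eq)
  ultimately show ?thesis
    using periodic by blast
qed

lemma dir_cong: "i mod 4 = j mod 4 \<Longrightarrow> dir i = dir j"
  unfolding dir_def by simp

lemma Sset_cong: "i mod 4 = j mod 4 \<Longrightarrow> Sset n m R1 R2 i = Sset n m R1 R2 j"
  unfolding Sset_def Kset_def by simp

lemma triple_at_cong: "i mod 4 = j mod 4 \<Longrightarrow> triple_at T s i = triple_at T s j"
  unfolding triple_at_def by (metis dir_cong mod_add_cong)

lemma cyclic_triomino_solution_triple_at:
  assumes "cyclic_triomino_solution n m R1 R2 T"
  shows "triple_at T s j \<in> Sset n m R1 R2 j"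
proof -
  define j' where "j' = (j - 1) mod 4 + 1"
  have "j' \<in> {1..4}" "j' mod 4 = j mod 4"
    unfolding j'_def by (auto simp: mod_add_left_eq)
  then show ?thesis
    using assms unfolding cyclic_triomino_solution_def
    by (metis Sset_cong triple_at_cong)
qed

lemma red3_Lset: "m < n \<Longrightarrow> red3 n ` Lset m = Lset m"
  unfolding Lset_def red3_def by force

lemma p_prop_iff_Lset: "m < n \<Longrightarrow> p_prop n m T s i \<longleftrightarrow> triple_at T s i \<in> Lset m"
  unfolding p_prop_def by (simp add: red3_Lset)

lemma Kset_not_Lset:
  assumes "R1 \<subseteq> {1..m} \<times> {1..m}" and "R2 \<subseteq> {1..m} \<times> {1..m}"
    and "(a, b, c) \<in> Kset m R1 R2 i" and "(a, b, c) \<notin> Lset m"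
  shows "a = 0 \<and> b \<in> {1..m}"
  using assms unfolding Kset_def by (auto split: if_splits)

lemma Sset_second_zero_imp_third_zero:
  assumes "2 * m < n"
    and R1: "R1 \<subseteq> {1..m} \<times> {1..m}" and R2: "R2 \<subseteq> {1..m} \<times> {1..m}"
    and "(x, 0, z) \<in> Sset n m R1 R2 i" and x: "x \<in> {1..m}"
  shows "z = 0"
proof -
  obtain a b c k where abc: "(a, b, c) \<in> Kset m R1 R2 i" and k: "k \<in> {0..<n}"
    and entries: "x = (a + k) mod n" "0 = (b + k) mod n" "z = (c + k) mod n"
    using assms(4) unfolding Sset_def red3_def by auto
  show ?thesis
  proof (cases "(a, b, c) \<in> Lset m")
    case True
    then show ?thesis
      using entries by (auto simp: Lset_def)
  next
    case False
    then have "a = 0" and b: "b \<in> {1..m}"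
      using Kset_not_Lset[OF R1 R2 abc] by auto
    then have "k = x"
      using entries(1) k by simp
    then have "(b + k) mod n = b + k"
      using b x \<open>2 * m < n\<close> by simp
    then show ?thesis
      using entries(2) b x \<open>k = x\<close> by simp
  qed
qed

theorem lemma3p2:
  fixes m n :: int and R1 R2 :: "(int \<times> int) set"
    and T :: "int \<times> int \<Rightarrow> int" and s :: "int \<times> int" and i :: int
  assumes "m \<ge> 1"
    and "R1 \<subseteq> {1..m} \<times> {1..m}" and "R2 \<subseteq> {1..m} \<times> {1..m}"
    and "n \<ge> 2 * m + 1"
    and "cyclic_triomino_solution n m R1 R2 T"
    and "i \<in> {1..4}" and "p_prop n m T s i"
  shows "\<forall>j\<in>{1..4}. p_prop n m T s j"
proof -
  have "m < n" "2 * m < n"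
    using assms(1,4) by auto
  define P where "P j \<longleftrightarrow> T (vadd s (dir j)) = 0" for j
  have "triple_at T s i \<in> Lset m"
    using assms(7) p_prop_iff_Lset[OF \<open>m < n\<close>] by blast
  then have centre: "T s \<in> {1..m}" and "P i"
    unfolding Lset_def triple_at_def P_def by auto
  have "P j" for j
  proof (rule periodic_step_propagation[of 4])
    show "P j = P j'" if "j mod 4 = j' mod 4" for j j'
      using dir_cong[OF that] unfolding P_def by simp
    show "P (j + 1)" if "P j" for j
      using Sset_second_zero_imp_third_zero[OF \<open>2 * m < n\<close> assms(2,3) _ centre]
        cyclic_triomino_solution_triple_at[OF assms(5), of s j] that
      unfolding P_def triple_at_def by simp
  qed (use \<open>P i\<close> in auto)
  then have "triple_at T s j \<in> Lset m" for j
    using centre unfolding P_def triple_at_def Lset_def by simp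
  then show ?thesis
    using p_prop_iff_Lset[OF \<open>m < n\<close>] by blast
qed

end
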